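(* For every $v\in\mathbb C$, in the ring of formal power series in $D$, \[ \Bigl(1-\tfrac{Y_{n-2}(v+4)}{Y_{n-1}(v+5)Y_n(v+5)}D^2\Bigr)\Bigl(1-\tfrac{Y_{n-1}(v+3)}{Y_n(v+5)}D^2\Bigr)\Bigl(1-\tfrac{Y_n(v+3)}{Y_n(v+7)}D^4\Bigr)^{-1}\Bigl(1-\tfrac{Y_n(v+3)}{Y_{n-1}(v+5)}D^2\Bigr)\Bigl(1-\tfrac{Y_{n-1}(v+3)Y_n(v+3)}{Y_{n-2}(v+4)}D^2\Bigr) \] \[ =1-\sum_{j\ge0}\Bigl(k_{n-1}(v+4j+5)h_n(v+3)+(1-\delta_{j0})k_n(v+4j+5)h_{n-1}(v+3)\Bigr)D^{4j+2} \] \[ \quad+\sum_{j\ge0}\Bigl(k_{n-1}(v+4j+7)h_{n-1}(v+3)+k_n(v+4j+7)h_n(v+3)-\delta_{j0}\tfrac{Y_{n-2}(v+4)}{Y_{n-2}(v+6)}\Bigr)D^{4j+4}. \]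
   Context: Fix $n\ge4$. Let $Q_a(u)$ ($1\le a\le n$, $u\in\mathbb C$) be algebraically independent commuting indeterminates and $Y_a(u)=Q_a(u-1)/Q_a(u+1)$, $\mathcal Y=\mathbb Z[Y_a(u)^{\pm1}]$. Formal power series $\sum_{j\ge0}c_j(u)D^j$ with $c_j(u)$ in the fraction field of $\mathcal Y$ are multiplied using $D\,c(u)=c(u+1)D$ (here all coefficients depend on the parameter $v$, and $D\,c(v)=c(v+1)D$); $(1-cD^4)^{-1}=\sum_{k\ge0}(cD^4)^k$. For $a\in\{n-1,n\}$: $h_a(u)=Y_a(u)+\frac{Y_{n-2}(u+1)}{Y_a(u+2)}$ and $k_a(u)=Y_a(u)^{-1}+\frac{Y_a(u-2)}{Y_{n-2}(u-1)}$. *)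

theory Defs
  imports Complex_Main
begin

text \<open>Formal power series in D whose coefficients are functions of the
parameter v, with the twisted rule D c(v) = c(v+1) D.
A series is represented by its coefficient map  n \<mapsto> (v \<mapsto> c_n(v)),
i.e. it stands for the sum over n of c_n(v) D^n.\<close>

type_synonym 'a dser = "nat \<Rightarrow> complex \<Rightarrow> 'a"

definition dmul :: "'a::comm_ring_1 dser \<Rightarrow> 'a dser \<Rightarrow> 'a dser" where
  "dmul a b = (\<lambda>n v. \<Sum>i\<le>n. a i v * b (n - i) (v + of_nat i))"

definition done_ser :: "'a::comm_ring_1 dser" where
  "done_ser = (\<lambda>n v. if n = 0 then 1 else 0)"

definition dsub :: "'a::comm_ring_1 dser \<Rightarrow> 'a dser \<Rightarrow> 'a dser" where
  "dsub a b = (\<lambda>n v. a n v - b n v)"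

definition dmono :: "(complex \<Rightarrow> 'a::comm_ring_1) \<Rightarrow> nat \<Rightarrow> 'a dser" where
  "dmono c m = (\<lambda>n v. if n = m then c v else 0)"

primrec dpow :: "'a::comm_ring_1 dser \<Rightarrow> nat \<Rightarrow> 'a dser" where
  "dpow a 0 = done_ser"
| "dpow a (Suc k) = dmul a (dpow a k)"

text \<open>(1 - c D^m)^{-1} := sum over k of (c D^m)^k  (for m \<ge> 1 the series
(c D^m)^k has order \<ge> k, so the coefficient of D^n only receives
contributions from k \<le> n).\<close>
definition dgeom :: "(complex \<Rightarrow> 'a::comm_ring_1) \<Rightarrow> nat \<Rightarrow> 'a dser" where
  "dgeom c m = (\<lambda>n v. \<Sum>k\<le>n. dpow (dmono c m) k n v)"

definition Yf :: "(nat \<Rightarrow> complex \<Rightarrow> 'a::field) \<Rightarrow> nat \<Rightarrow> complex \<Rightarrow> 'a" where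
  "Yf Q a u = Q a (u - 1) / Q a (u + 1)"

definition hf :: "(nat \<Rightarrow> complex \<Rightarrow> 'a::field) \<Rightarrow> nat \<Rightarrow> nat \<Rightarrow> complex \<Rightarrow> 'a" where
  "hf Q n a u = Yf Q a u + Yf Q (n - 2) (u + 1) / Yf Q a (u + 2)"

definition kf :: "(nat \<Rightarrow> complex \<Rightarrow> 'a::field) \<Rightarrow> nat \<Rightarrow> nat \<Rightarrow> complex \<Rightarrow> 'a" where
  "kf Q n a u = inverse (Yf Q a u) + Yf Q a (u - 2) / Yf Q (n - 2) (u - 1)"

end

theory Submission
  imports Defs
begin

text \<open>Write A, B, C for Y_{n-2}, Y_{n-1}, Y_n; only their being nowhere zero is used. The
geometric series telescopes: its coefficient of D^m is C(v+3)/C(v+m+3) for 4 dividing m. Multiplied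
by the product 1 - w D^2 + w' D^4 of the last two factors, it yields the series whose coefficient of
D^m is -C(v+3) k_{n-1}(v+m+3) for m = 2 mod 4 and C(v+3) k_n(v+m+3) for m = 0 mod 4, m > 0. The first
two factors act as 1 - s D^2 + p D^4 with s(v) C(v+5) = h_{n-1}(v+3) and
p(v) C(v+7) = h_n(v+3) - C(v+3), which turns these k's into the stated sums of products h k; the
coefficients of D^2 and D^4 see the constant term 1 instead, which produces the delta corrections.\<close>

definition dadd :: "'a::comm_ring_1 dser \<Rightarrow> 'a dser \<Rightarrow> 'a dser" where
  "dadd a b = (\<lambda>n v. a n v + b n v)"

lemma dmul_dmono_left:
  "dmul (dmono c d) x = (\<lambda>n v. if d \<le> n then c v * x (n - d) (v + of_nat d) else 0)"
  by (auto simp: dmul_def dmono_def fun_eq_iff if_distrib[of "\<lambda>t. t * _"] cong: if_cong)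

lemma dmul_dmono_right:
  "dmul x (dmono c d) = (\<lambda>n v. if d \<le> n then x (n - d) v * c (v + of_nat (n - d)) else 0)"
proof (intro ext)
  fix n v
  have "dmul x (dmono c d) n v = (\<Sum>i\<le>n. if i = n - d \<and> d \<le> n then x i v * c (v + of_nat i) else 0)"
    unfolding dmul_def dmono_def by (intro sum.cong) auto
  then show "dmul x (dmono c d) n v = (if d \<le> n then x (n - d) v * c (v + of_nat (n - d)) else 0)"
    by (cases "d \<le> n") simp_all
qed

lemma dmul_one_left [simp]: "dmul done_ser x = x"
  using dmul_dmono_left[of "\<lambda>_. 1" 0 x] by (simp add: done_ser_def dmono_def fun_eq_iff)

lemma dmul_one_right [simp]: "dmul x done_ser = x"
  using dmul_dmono_right[of x "\<lambda>_. 1" 0] by (simp add: done_ser_def dmono_def fun_eq_iff)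

lemma dmul_dsub_left: "dmul (dsub a b) x = dsub (dmul a x) (dmul b x)"
  by (simp add: dmul_def dsub_def fun_eq_iff algebra_simps sum_subtractf)

lemma dmul_dsub_right: "dmul x (dsub a b) = dsub (dmul x a) (dmul x b)"
  by (simp add: dmul_def dsub_def fun_eq_iff algebra_simps sum_subtractf)

lemma dmul_dadd_right: "dmul x (dadd a b) = dadd (dmul x a) (dmul x b)"
  by (simp add: dmul_def dadd_def fun_eq_iff algebra_simps sum.distrib)

lemma dpow_dmono: "dpow (dmono c d) k = dmono (\<lambda>v. \<Prod>i<k. c (v + of_nat (d * i))) (d * k)"
proof (induction k)
  case 0
  then show ?case by (simp add: done_ser_def dmono_def)
next
  case (Suc k)
  have "c v * (\<Prod>i<k. c (v + of_nat d + of_nat (d * i))) = (\<Prod>i<Suc k. c (v + of_nat (d * i)))" for v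
    by (subst prod.lessThan_Suc_shift) (simp add: add.assoc)
  moreover have "(d \<le> n \<and> n - d = d * k) = (n = d * Suc k)" for n
    by auto
  ultimately show ?case
    unfolding dpow.simps Suc.IH dmul_dmono_left by (auto simp: dmono_def fun_eq_iff simp del: of_nat_mult)
qed

lemma dgeom_dmono:
  assumes "0 < d"
  shows "dgeom c d = (\<lambda>n v. if d dvd n then \<Prod>i<n div d. c (v + of_nat (d * i)) else 0)"
proof (intro ext)
  fix n v
  have "dgeom c d n v = (\<Sum>k\<le>n. if k = n div d \<and> d dvd n then \<Prod>i<k. c (v + of_nat (d * i)) else 0)"
    unfolding dgeom_def dpow_dmono using assms by (intro sum.cong) (auto simp: dmono_def)
  moreover have "n div d \<le> n"
    by simp
  ultimately show "dgeom c d n v = (if d dvd n then \<Prod>i<n div d. c (v + of_nat (d * i)) else 0)"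
    by (simp cong: conj_cong)
qed

lemma dgeom_ratio:
  fixes f :: "complex \<Rightarrow> 'a::field"
  assumes "0 < d" and "\<And>u. f u \<noteq> 0"
  shows "dgeom (\<lambda>v. f v / f (v + of_nat d)) d = (\<lambda>n v. if d dvd n then f v / f (v + of_nat n) else 0)"
proof -
  have "(\<Prod>i<k. f (v + of_nat (d * i)) / f (v + of_nat (d * i) + of_nat d)) = f v / f (v + of_nat (d * k))"
    for k v
    using prod_lessThan_telescope'[of k "\<lambda>i. f (v + of_nat (d * i))"] assms(2)
    by (simp add: algebra_simps)
  then show ?thesis
    using assms(1) by (auto simp: dgeom_dmono fun_eq_iff)
qed

lemma dmul_binomials:
  "dmul (dsub done_ser (dmono p d)) (dsub done_ser (dmono q d)) =
     dadd (dsub done_ser (dmono (\<lambda>v. p v + q v) d)) (dmono (\<lambda>v. p v * q (v + of_nat d)) (2 * d))"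
  unfolding dmul_dsub_left dmul_one_left dmul_dmono_left
  by (auto simp: fun_eq_iff dsub_def dadd_def dmono_def done_ser_def algebra_simps)

lemma dmul_binomial_left:
  "dmul (dsub done_ser (dmono c d)) x = (\<lambda>n v. x n v - (if d \<le> n then c v * x (n - d) (v + of_nat d) else 0))"
  unfolding dmul_dsub_left dmul_one_left dmul_dmono_left by (simp add: dsub_def)

lemma dmul_binomial_binomial:
  "dmul (dsub done_ser (dmono p d)) (dmul (dsub done_ser (dmono q d)) x) n v =
     x n v - (if d \<le> n then (p v + q v) * x (n - d) (v + of_nat d) else 0)
       + (if 2 * d \<le> n then p v * q (v + of_nat d) * x (n - 2 * d) (v + of_nat (2 * d)) else 0)"
proof -
  have "n - d - d = n - 2 * d" and "v + of_nat d + of_nat d = v + of_nat (2 * d)"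
    by simp_all
  then show ?thesis
    by (auto simp: dmul_binomial_left algebra_simps)
qed

lemma dmul_trinomial_right:
  "dmul x (dadd (dsub done_ser (dmono p d)) (dmono q e)) =
     (\<lambda>n v. x n v - (if d \<le> n then x (n - d) v * p (v + of_nat (n - d)) else 0)
       + (if e \<le> n then x (n - e) v * q (v + of_nat (n - e)) else 0))"
  unfolding dmul_dadd_right dmul_dsub_right dmul_one_right dmul_dmono_right by (simp add: dsub_def dadd_def)

definition hY :: "(complex \<Rightarrow> 'a::field) \<Rightarrow> (complex \<Rightarrow> 'a) \<Rightarrow> complex \<Rightarrow> 'a" where
  "hY A Y u = Y u + A (u + 1) / Y (u + 2)"

definition kY :: "(complex \<Rightarrow> 'a::field) \<Rightarrow> (complex \<Rightarrow> 'a) \<Rightarrow> complex \<Rightarrow> 'a" where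
  "kY A Y u = inverse (Y u) + Y (u - 2) / A (u - 1)"

lemma mod4_cases:
  fixes m :: nat
  obtains "m = 0" | "odd m" | j where "m = 4 * j + 2" | j where "m = 4 * j + 4"
proof -
  have "m = 0 \<or> odd m \<or> m = 4 * (m div 4) + 2 \<or> m = 4 * (m div 4 - 1) + 4"
    by presburger
  then show ?thesis
    using that by blast
qed

context
  fixes A B C :: "complex \<Rightarrow> 'a::field"
  assumes A_nonzero: "\<And>u. A u \<noteq> 0" and B_nonzero: "\<And>u. B u \<noteq> 0" and C_nonzero: "\<And>u. C u \<noteq> 0"
begin

lemma three_factor_product:
  "dmul (dgeom (\<lambda>v. C (v + 3) / C (v + 7)) 4)
     (dmul (dsub done_ser (dmono (\<lambda>v. C (v + 3) / B (v + 5)) 2))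
           (dsub done_ser (dmono (\<lambda>v. B (v + 3) * C (v + 3) / A (v + 4)) 2))) =
   (\<lambda>m v. if m = 0 then 1
          else if m mod 4 = 2 then - C (v + 3) * kY A B (v + of_nat m + 3)
          else if m mod 4 = 0 then C (v + 3) * kY A C (v + of_nat m + 3)
          else 0)" (is "?L = ?R")
proof (intro ext)
  fix m v
  define g where "g = (\<lambda>m v. if 4 dvd m then C (v + 3) / C (v + of_nat m + 3) else (0::'a))"
  have "dgeom (\<lambda>v. C (v + 3) / C (v + 7)) 4 = g"
    using dgeom_ratio[of 4 "\<lambda>u. C (u + 3)"] C_nonzero by (simp add: g_def add_ac)
  then have L: "?L m v = g m v
       - (if 2 \<le> m then g (m - 2) v * (C (v + of_nat (m - 2) + 3) / B (v + of_nat (m - 2) + 5)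
         + B (v + of_nat (m - 2) + 3) * C (v + of_nat (m - 2) + 3) / A (v + of_nat (m - 2) + 4)) else 0)
       + (if 4 \<le> m then g (m - 4) v * (C (v + of_nat (m - 4) + 3) / B (v + of_nat (m - 4) + 5)
         * (B (v + of_nat (m - 4) + 5) * C (v + of_nat (m - 4) + 5) / A (v + of_nat (m - 4) + 6))) else 0)"
    by (simp add: dmul_binomials dmul_trinomial_right)
  show "?L m v = ?R m v"
  proof (cases m rule: mod4_cases)
    case 1
    then show ?thesis unfolding L by (simp add: g_def C_nonzero)
  next
    case 2
    then have "m \<noteq> 0" "m mod 4 \<noteq> 0" "m mod 4 \<noteq> 2" "\<not> 4 dvd m"
      "2 \<le> m \<Longrightarrow> \<not> 4 dvd (m - 2)" "4 \<le> m \<Longrightarrow> \<not> 4 dvd (m - 4)"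
      by presburger+
    with 2 show ?thesis unfolding L by (simp add: g_def)
  next
    case (3 j)
    then have "m mod 4 = 2" "\<not> 4 dvd m" "4 dvd (m - 2)" "4 \<le> m \<Longrightarrow> \<not> 4 dvd (m - 4)" "2 \<le> m"
      by presburger+
    moreover have "(of_nat (m - 2) :: complex) = of_nat m - 2"
      using \<open>2 \<le> m\<close> by simp
    ultimately show ?thesis
      unfolding L by (simp add: g_def kY_def field_simps A_nonzero B_nonzero C_nonzero)
  next
    case (4 j)
    then have "m mod 4 = 0" "4 dvd m" "\<not> 4 dvd (m - 2)" "4 dvd (m - 4)" "4 \<le> m"
      by presburger+
    moreover have "(of_nat (m - 4) :: complex) = of_nat m - 4"
      using \<open>4 \<le> m\<close> by simp
    ultimately show ?thesis
      unfolding L by (simp add: g_def kY_def field_simps A_nonzero B_nonzero C_nonzero)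
  qed
qed

lemma five_factor_product:
  "dmul (dsub done_ser (dmono (\<lambda>v. A (v + 4) / (B (v + 5) * C (v + 5))) 2))
     (dmul (dsub done_ser (dmono (\<lambda>v. B (v + 3) / C (v + 5)) 2))
     (dmul (dgeom (\<lambda>v. C (v + 3) / C (v + 7)) 4)
     (dmul (dsub done_ser (dmono (\<lambda>v. C (v + 3) / B (v + 5)) 2))
           (dsub done_ser (dmono (\<lambda>v. B (v + 3) * C (v + 3) / A (v + 4)) 2)))))
    = (\<lambda>m v.
        if m = 0 then 1
        else if m mod 4 = 2 then
          (let j = m div 4 in
            - (kY A B (v + of_nat (4 * j + 5)) * hY A C (v + 3)
               + (if j = 0 then 0 else 1) * kY A C (v + of_nat (4 * j + 5)) * hY A B (v + 3)))
        else if m mod 4 = 0 then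
          (let j = m div 4 - 1 in
            kY A B (v + of_nat (4 * j + 7)) * hY A B (v + 3)
            + kY A C (v + of_nat (4 * j + 7)) * hY A C (v + 3)
            - (if j = 0 then 1 else 0) * (A (v + 4) / A (v + 6)))
        else 0)" (is "?L = ?R")
proof (intro ext)
  fix m v
  let ?a = "\<lambda>v. A (v + 4) / (B (v + 5) * C (v + 5))" and ?b = "\<lambda>v. B (v + 3) / C (v + 5)"
  define P where "P = (\<lambda>m v. if m = 0 then 1
          else if m mod 4 = 2 then - C (v + 3) * kY A B (v + of_nat m + 3)
          else if m mod 4 = 0 then C (v + 3) * kY A C (v + of_nat m + 3)
          else (0::'a))"
  have L: "?L m v = P m v - (if 2 \<le> m then (?a v + ?b v) * P (m - 2) (v + 2) else 0)
      + (if 4 \<le> m then ?a v * ?b (v + 2) * P (m - 4) (v + 4) else 0)"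
    using dmul_binomial_binomial[of ?a 2 ?b] by (simp add: three_factor_product P_def)
  show "?L m v = ?R m v"
  proof (cases m rule: mod4_cases)
    case 1
    then show ?thesis unfolding L by (simp add: P_def)
  next
    case 2
    have odd_mod4: "k \<noteq> 0" "k mod 4 \<noteq> 0" "k mod 4 \<noteq> 2" if "odd k" for k :: nat
      using that by presburger+
    have P_odd: "P k u = 0" if "odd k" for k u
      using odd_mod4[OF that] by (simp add: P_def)
    have "2 \<le> m \<Longrightarrow> odd (m - 2)" "4 \<le> m \<Longrightarrow> odd (m - 4)"
      using 2 by presburger+
    with 2 show ?thesis unfolding L by (simp add: P_odd odd_mod4[OF 2])
  next
    case (3 j)
    show ?thesis
    proof (cases j)
      case 0
      with 3 show ?thesis unfolding L
        by (simp add: P_def kY_def hY_def field_simps A_nonzero B_nonzero C_nonzero)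
    next
      case (Suc i)
      with 3 have "m = 4 * i + 6" by simp
      moreover have "(4 * i + 2) mod 4 = 2"
        by presburger
      ultimately show ?thesis unfolding L
        by (simp add: P_def hY_def field_simps A_nonzero B_nonzero C_nonzero)
    qed
  next
    case (4 j)
    show ?thesis
    proof (cases j)
      case 0
      with 4 show ?thesis unfolding L
        by (simp add: P_def kY_def hY_def field_simps A_nonzero B_nonzero C_nonzero)
    next
      case (Suc i)
      with 4 have "m = 4 * i + 8" by simp
      moreover have "(4 * i + 4) mod 4 = 0"
        by presburger
      ultimately show ?thesis unfolding L
        by (simp add: P_def hY_def field_simps A_nonzero B_nonzero C_nonzero)
    qed
  qed
qed

end

lemma hf_eq_hY: "hf Q n a = hY (Yf Q (n - 2)) (Yf Q a)"
  by (simp add: fun_eq_iff hf_def hY_def)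

lemma kf_eq_kY: "kf Q n a = kY (Yf Q (n - 2)) (Yf Q a)"
  by (simp add: fun_eq_iff kf_def kY_def)

theorem mainTheorem14:
  fixes Q :: "nat \<Rightarrow> complex \<Rightarrow> 'a::field" and n :: nat
  assumes "n \<ge> 4"
    and "\<And>a u. 1 \<le> a \<Longrightarrow> a \<le> n \<Longrightarrow> Q a u \<noteq> 0"
  shows
   "dmul (dsub done_ser (dmono (\<lambda>v. Yf Q (n-2) (v+4) / (Yf Q (n-1) (v+5) * Yf Q n (v+5))) 2))
     (dmul (dsub done_ser (dmono (\<lambda>v. Yf Q (n-1) (v+3) / Yf Q n (v+5)) 2))
     (dmul (dgeom (\<lambda>v. Yf Q n (v+3) / Yf Q n (v+7)) 4)
     (dmul (dsub done_ser (dmono (\<lambda>v. Yf Q n (v+3) / Yf Q (n-1) (v+5)) 2))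
           (dsub done_ser (dmono (\<lambda>v. Yf Q (n-1) (v+3) * Yf Q n (v+3) / Yf Q (n-2) (v+4)) 2)))))
    = (\<lambda>m v.
        if m = 0 then 1
        else if m mod 4 = 2 then
          (let j = m div 4 in
            - (kf Q n (n-1) (v + of_nat (4*j+5)) * hf Q n n (v+3)
               + (if j = 0 then 0 else 1) * kf Q n n (v + of_nat (4*j+5)) * hf Q n (n-1) (v+3)))
        else if m mod 4 = 0 then
          (let j = m div 4 - 1 in
            kf Q n (n-1) (v + of_nat (4*j+7)) * hf Q n (n-1) (v+3)
            + kf Q n n (v + of_nat (4*j+7)) * hf Q n n (v+3)
            - (if j = 0 then 1 else 0) * (Yf Q (n-2) (v+4) / Yf Q (n-2) (v+6)))
        else 0)"
proof -
  have "Yf Q a u \<noteq> 0" if "1 \<le> a" "a \<le> n" for a u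
    using assms(2)[OF that] by (simp add: Yf_def)
  then have "\<And>u. Yf Q (n - 2) u \<noteq> 0" "\<And>u. Yf Q (n - 1) u \<noteq> 0" "\<And>u. Yf Q n u \<noteq> 0"
    using assms(1) by auto
  then show ?thesis
    unfolding hf_eq_hY kf_eq_kY by (rule five_factor_product[of "Yf Q (n - 2)" "Yf Q (n - 1)" "Yf Q n"])
qed

end
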